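(* Let $d,m,e$ be parameters with $m$ a prime power and $d,e\le m$, let $n=dm$, $p=n^{-0.1}$ and $t=n/p=n^{1.1}$ (assumed an integer). Let $P$ be the random polynomial obtained from $\mathsf{NW\circ Lin}_{d,m,e}$ by independently setting each variable $x_{i,j,h}$ ($i\in[d], j\in[m], h\in[t]$) to zero with probability $1-p$. Then with probability at least $1-o(1)$ (as $n\to\infty$), $\mathsf{NW}_{d,m,e}$ is a projection of $P$, i.e. it is obtained from $P$ by setting some further variables to zero and renaming the remaining variables.
   Context: Identify $[m]$ with $\mathbb{F}_m$. $\mathsf{NW}_{d,m,e}(\{x_{i,j}\})=\sum_{q\in\mathbb{F}_m[u],\ \deg q<e} x_{1,q(1)}\cdots x_{d,q(d)}$. The polynomial $\mathsf{NW\circ Lin}_{d,m,e}$ in variables $\{x_{i,j,h}: i\in[d], j\in[m], h\in[t]\}$ is obtained from $\mathsf{NW}_{d,m,e}$ by substituting $x_{i,j}\mapsto \sum_{h=1}^{t} x_{i,j,h}$ for every $i\in[d], j\in[m]$. *)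

theory Defs
  imports "HOL-Probability.Probability" "HOL-Algebra.Ring"
begin

text \<open>Evaluation at u of the polynomial q(X) = sum_{k<e} c_k X^k over the ring R,
  given by its coefficient vector c (entries c 0, ..., c (e-1)).  The polynomials of
  degree < e over F_m correspond bijectively to such vectors c in F_m^e.\<close>
definition coeff_poly_eval :: "('a, 'b) ring_scheme \<Rightarrow> nat \<Rightarrow> (nat \<Rightarrow> 'a) \<Rightarrow> 'a \<Rightarrow> 'a" where
  "coeff_poly_eval R e c u = finsum R (\<lambda>k. c k \<otimes>\<^bsub>R\<^esub> (u [^]\<^bsub>R\<^esub> k)) {..<e}"

text \<open>NW_{d,m,e} as a polynomial with integer coefficients, represented by its evaluation
  map on assignments x :: nat \<times> nat \<Rightarrow> int (variable x_{i,j} is x (i,j), i in [d], j in [m]).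
  [m] = {1..m} is identified with the field F_m = carrier R via the bijection phi.\<close>
definition NW :: "('a, 'b) ring_scheme \<Rightarrow> (nat \<Rightarrow> 'a) \<Rightarrow> nat \<Rightarrow> nat \<Rightarrow> nat \<Rightarrow> (nat \<times> nat \<Rightarrow> int) \<Rightarrow> int" where
  "NW R phi d m e x =
     (\<Sum>c \<in> {..<e} \<rightarrow>\<^sub>E carrier R.
        \<Prod>i\<in>{1..d}. x (i, inv_into {1..m} phi (coeff_poly_eval R e c (phi i))))"

definition NWLin :: "('a, 'b) ring_scheme \<Rightarrow> (nat \<Rightarrow> 'a) \<Rightarrow> nat \<Rightarrow> nat \<Rightarrow> nat \<Rightarrow> nat
    \<Rightarrow> (nat \<times> nat \<times> nat \<Rightarrow> int) \<Rightarrow> int" where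
  "NWLin R phi d m e t y = NW R phi d m e (\<lambda>(i, j). \<Sum>h\<in>{1..t}. y (i, j, h))"

definition NWLin_restr :: "('a, 'b) ring_scheme \<Rightarrow> (nat \<Rightarrow> 'a) \<Rightarrow> nat \<Rightarrow> nat \<Rightarrow> nat \<Rightarrow> nat
    \<Rightarrow> (nat \<times> nat \<times> nat \<Rightarrow> bool) \<Rightarrow> (nat \<times> nat \<times> nat \<Rightarrow> int) \<Rightarrow> int" where
  "NWLin_restr R phi d m e t K y = NWLin R phi d m e t (\<lambda>v. if K v then y v else 0)"

text \<open>Since the coefficient ring int is an infinite
  integral domain, equality as functions on int-assignments is equality of polynomials.\<close>
definition is_projection :: "(('w \<Rightarrow> int) \<Rightarrow> int) \<Rightarrow> 'w set \<Rightarrow> (('v \<Rightarrow> int) \<Rightarrow> int) \<Rightarrow> bool" where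
  "is_projection f W g \<longleftrightarrow>
     (\<exists>\<sigma> :: 'v \<Rightarrow> 'w option. range \<sigma> \<subseteq> insert None (Some ` W) \<and>
        (\<forall>a. f a = g (\<lambda>v. case \<sigma> v of None \<Rightarrow> 0 | Some w \<Rightarrow> a w)))"

end

theory Submission
  imports Defs
begin

text \<open>If every variable x_{i,j} keeps at least one copy x_{i,j,h} after the restriction, then
  renaming one surviving copy per (i,j) back to x_{i,j} and zeroing all others turns the
  restricted polynomial into NW again.  A fixed (i,j) loses all t copies with probability
  (1 - p)^t \<le> exp (- p t) = exp (- n), so by the union bound over the n cells the restriction
  fails with probability at most n exp (- n) \<le> 4 / n.\<close>

lemma coeff_poly_eval_closed:
  assumes "ring R" "c \<in> {..<e} \<rightarrow>\<^sub>E carrier R" "u \<in> carrier R"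
  shows "coeff_poly_eval R e c u \<in> carrier R"
proof -
  interpret ring R by fact
  show ?thesis unfolding coeff_poly_eval_def
    using assms(2,3) by (intro finsum_closed) (auto intro!: m_closed nat_pow_closed)
qed

lemma NW_cong:
  assumes "ring R" "bij_betw phi {1..m} (carrier R)" "d \<le> m"
    and "\<And>i j. i \<in> {1..d} \<Longrightarrow> j \<in> {1..m} \<Longrightarrow> x (i, j) = x' (i, j)"
  shows "NW R phi d m e x = NW R phi d m e x'"
  unfolding NW_def
proof (intro sum.cong prod.cong refl)
  fix c i assume c: "c \<in> {..<e} \<rightarrow>\<^sub>E carrier R" and i: "i \<in> {1..d}"
  have im: "phi ` {1..m} = carrier R" using assms(2) by (simp add: bij_betw_def)
  with i assms(3) have "phi i \<in> carrier R" by auto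
  then have "coeff_poly_eval R e c (phi i) \<in> phi ` {1..m}"
    using coeff_poly_eval_closed[OF assms(1) c] im by auto
  then have "inv_into {1..m} phi (coeff_poly_eval R e c (phi i)) \<in> {1..m}"
    by (rule inv_into_into)
  with assms(4) i show "x (i, inv_into {1..m} phi (coeff_poly_eval R e c (phi i))) =
      x' (i, inv_into {1..m} phi (coeff_poly_eval R e c (phi i)))"
    by blast
qed

definition all_cells_kept :: "nat \<Rightarrow> nat \<Rightarrow> nat \<Rightarrow> (nat \<times> nat \<times> nat \<Rightarrow> bool) \<Rightarrow> bool" where
  "all_cells_kept d m t K \<longleftrightarrow> (\<forall>i\<in>{1..d}. \<forall>j\<in>{1..m}. \<exists>h\<in>{1..t}. K (i, j, h))"

lemma is_projection_NWLin_restr_if_all_cells_kept: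
  assumes "ring R" "bij_betw phi {1..m} (carrier R)" "d \<le> m"
    and "all_cells_kept d m t K"
  shows "is_projection (NW R phi d m e) ({1..d} \<times> {1..m}) (NWLin_restr R phi d m e t K)"
proof -
  obtain hs where hs: "\<And>i j. i \<in> {1..d} \<Longrightarrow> j \<in> {1..m} \<Longrightarrow> hs i j \<in> {1..t} \<and> K (i, j, hs i j)"
    using assms(4) unfolding all_cells_kept_def by metis
  define \<sigma> where "\<sigma> = (\<lambda>(i, j, h). if i \<in> {1..d} \<and> j \<in> {1..m} \<and> h = hs i j
      then Some (i, j) else None)"
  have "range \<sigma> \<subseteq> insert None (Some ` ({1..d} \<times> {1..m}))"
    unfolding \<sigma>_def by auto
  moreover have "NW R phi d m e a = NWLin_restr R phi d m e t K
      (\<lambda>v. case \<sigma> v of None \<Rightarrow> 0 | Some w \<Rightarrow> a w)" for a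
    unfolding NWLin_restr_def NWLin_def
  proof (rule NW_cong[OF assms(1-3)])
    fix i j assume i: "i \<in> {1..d}" and j: "j \<in> {1..m}"
    have "(\<Sum>h\<in>{1..t}. if K (i, j, h) then case \<sigma> (i, j, h) of None \<Rightarrow> 0 | Some w \<Rightarrow> a w else 0)
        = (\<Sum>h\<in>{1..t}. if h = hs i j then a (i, j) else 0)"
      using hs[OF i j] i j by (intro sum.cong) (auto simp: \<sigma>_def)
    also have "\<dots> = a (i, j)" using hs[OF i j] by simp
    finally show "a (i, j) = (\<lambda>(i, j). \<Sum>h\<in>{1..t}. (\<lambda>v. if K v then case \<sigma> v of None \<Rightarrow> 0
        | Some w \<Rightarrow> a w else 0) (i, j, h)) (i, j)" by simp
  qed
  ultimately show ?thesis unfolding is_projection_def by blast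
qed

lemma prob_cell_killed:
  fixes d m t :: nat
  assumes "0 \<le> p" "p \<le> 1" "i \<in> {1..d}" "j \<in> {1..m}"
  defines "A \<equiv> {1..d} \<times> {1..m} \<times> {1..t}"
  shows "measure_pmf.prob (Pi_pmf A False (\<lambda>_. bernoulli_pmf p))
     (Pi A (\<lambda>(i', j', _). if (i', j') = (i, j) then {False} else UNIV)) = (1 - p) ^ t"
proof -
  have "finite A" unfolding A_def by simp
  then have "measure_pmf.prob (Pi_pmf A False (\<lambda>_. bernoulli_pmf p))
      (Pi A (\<lambda>(i', j', _). if (i', j') = (i, j) then {False} else UNIV))
    = (\<Prod>v\<in>A. if v \<in> {i} \<times> {j} \<times> UNIV then 1 - p else 1)"
    using assms(1,2) by (subst measure_Pi_pmf_Pi) (auto intro!: prod.cong simp: measure_pmf_single)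
  also have "\<dots> = (\<Prod>v\<in>A \<inter> {i} \<times> {j} \<times> UNIV. 1 - p)"
    using \<open>finite A\<close> by (simp add: prod.If_cases)
  also have "A \<inter> {i} \<times> {j} \<times> UNIV = {i} \<times> {j} \<times> {1..t}"
    using assms(3,4) unfolding A_def by auto
  finally show ?thesis by simp
qed

lemma prob_all_cells_kept_ge:
  assumes "0 \<le> p" "p \<le> 1"
  shows "measure_pmf.prob (Pi_pmf ({1..d} \<times> {1..m} \<times> {1..t}) False (\<lambda>_. bernoulli_pmf p))
      {K. all_cells_kept d m t K} \<ge> 1 - real (d * m) * (1 - p) ^ t"
proof -
  define A where "A = {1..d} \<times> {1..m} \<times> {1..t}"
  define M where "M = Pi_pmf A False (\<lambda>_. bernoulli_pmf p)"
  define Killed where "Killed ij = Pi A (\<lambda>(i', j', _). if (i', j') = ij then {False} else UNIV)"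
    for ij :: "nat \<times> nat"
  have "{K. \<not> all_cells_kept d m t K} \<inter> set_pmf M \<subseteq> (\<Union>ij\<in>{1..d} \<times> {1..m}. Killed ij)"
    unfolding M_def Killed_def all_cells_kept_def
    by (auto simp: set_Pi_pmf A_def PiE_def)
  then have "measure_pmf.prob M {K. \<not> all_cells_kept d m t K}
      \<le> measure_pmf.prob M (\<Union>ij\<in>{1..d} \<times> {1..m}. Killed ij)"
    by (subst measure_Int_set_pmf[symmetric]) (intro measure_pmf.finite_measure_mono, auto)
  also have "\<dots> \<le> (\<Sum>ij\<in>{1..d} \<times> {1..m}. measure_pmf.prob M (Killed ij))"
    by (intro measure_pmf.finite_measure_subadditive_finite) auto
  also have "\<dots> = (\<Sum>ij\<in>{1..d} \<times> {1..m}. (1 - p) ^ t)"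
    using prob_cell_killed[OF assms] unfolding M_def Killed_def A_def by (intro sum.cong) auto
  also have "\<dots> = real (d * m) * (1 - p) ^ t" by simp
  finally have "measure_pmf.prob M {K. \<not> all_cells_kept d m t K} \<le> real (d * m) * (1 - p) ^ t" .
  moreover have "measure_pmf.prob M {K. \<not> all_cells_kept d m t K}
      = 1 - measure_pmf.prob M {K. all_cells_kept d m t K}"
    using measure_pmf.prob_compl[of "{K. all_cells_kept d m t K}" M] by (simp add: set_diff_eq)
  ultimately show ?thesis unfolding M_def A_def by simp
qed

lemma one_minus_power_le_exp:
  fixes p :: real
  assumes "p \<le> 1"
  shows "(1 - p) ^ t \<le> exp (- p * t)"
proof -
  have "(1 - p) ^ t \<le> exp (- p) ^ t"
    using assms exp_ge_add_one_self[of "- p"] by (intro power_mono) auto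
  also have "\<dots> = exp (- p * t)" by (simp flip: exp_of_nat_mult add: mult.commute)
  finally show ?thesis .
qed

lemma mult_exp_neg_le:
  fixes x :: real
  assumes "x > 0"
  shows "x * exp (- x) \<le> 4 / x"
proof -
  have "x\<^sup>2 / 4 \<le> (1 + x / 2)\<^sup>2" using assms by (simp add: power2_eq_square algebra_simps)
  also have "\<dots> \<le> exp (x / 2) ^ 2"
    using assms exp_ge_add_one_self[of "x / 2"] by (intro power_mono) auto
  also have "\<dots> = exp x" by (simp add: power2_eq_square flip: exp_add)
  finally have "x\<^sup>2 / 4 \<le> exp x" .
  with assms show ?thesis
    by (simp add: exp_minus field_simps power2_eq_square)
qed

lemma prob_is_projection_NWLin_restr_ge:
  assumes "ring R" "bij_betw phi {1..m} (carrier R)" "d \<le> m" "1 \<le> d * m"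
    and "real t = real (d * m) powr (11/10)"
  shows "1 - 4 / real (d * m) \<le> measure_pmf.prob
      (Pi_pmf ({1..d} \<times> {1..m} \<times> {1..t}) False (\<lambda>_. bernoulli_pmf (real (d * m) powr (- 1/10))))
      {K. is_projection (NW R phi d m e) ({1..d} \<times> {1..m}) (NWLin_restr R phi d m e t K)}"
proof -
  define n where "n = real (d * m)"
  define p where "p = n powr (- 1/10)"
  have n: "1 \<le> n" unfolding n_def using assms(4) by (metis of_nat_1 of_nat_le_iff)
  have p: "0 \<le> p" "p \<le> 1" using n powr_mono[of "- 1/10" 0 n] by (auto simp: p_def)
  have "p * t = n" using n by (simp add: p_def assms(5) n_def flip: powr_add)
  then have "n * (1 - p) ^ t \<le> n * exp (- n)"
    using one_minus_power_le_exp[OF p(2), of t] n by (intro mult_left_mono) auto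
  also have "\<dots> \<le> 4 / n" using mult_exp_neg_le[of n] n by simp
  finally have "1 - 4 / n \<le> 1 - n * (1 - p) ^ t" by simp
  also have "\<dots> \<le> measure_pmf.prob (Pi_pmf ({1..d} \<times> {1..m} \<times> {1..t}) False
      (\<lambda>_. bernoulli_pmf p)) {K. all_cells_kept d m t K}"
    using prob_all_cells_kept_ge[OF p] by (simp add: n_def)
  also have "\<dots> \<le> measure_pmf.prob (Pi_pmf ({1..d} \<times> {1..m} \<times> {1..t}) False
      (\<lambda>_. bernoulli_pmf p))
      {K. is_projection (NW R phi d m e) ({1..d} \<times> {1..m}) (NWLin_restr R phi d m e t K)}"
    using is_projection_NWLin_restr_if_all_cells_kept[OF assms(1-3)]
    by (intro measure_pmf.finite_measure_mono) auto
  finally show ?thesis by (simp add: p_def n_def)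
qed

theorem lemma7p2:
  shows "\<forall>\<epsilon>>0. \<exists>N. \<forall>(R :: ('a, 'b) ring_scheme) (phi :: nat \<Rightarrow> 'a) (d::nat) (m::nat) (e::nat) (t::nat).
      field R \<and> finite (carrier R) \<and> card (carrier R) = m \<and>
      bij_betw phi {1..m} (carrier R) \<and> d \<le> m \<and> e \<le> m \<and>
      N \<le> d * m \<and> real t = real (d * m) powr (11/10)
      \<longrightarrow> measure_pmf.prob
            (Pi_pmf ({1..d} \<times> {1..m} \<times> {1..t}) False
               (\<lambda>_. bernoulli_pmf (real (d * m) powr (- 1/10))))
            {K. is_projection (NW R phi d m e) ({1..d} \<times> {1..m}) (NWLin_restr R phi d m e t K)}
          \<ge> 1 - \<epsilon>"
proof -
  have threshold: "1 - \<epsilon> \<le> 1 - 4 / real n" "1 \<le> n"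
    if "\<epsilon> > 0" "nat \<lceil>4 / \<epsilon>\<rceil> + 1 \<le> n" for \<epsilon> :: real and n :: nat
  proof -
    from that(2) have "4 / \<epsilon> \<le> real n" by linarith
    with that show "1 - \<epsilon> \<le> 1 - 4 / real n" "1 \<le> n" by (auto simp: field_simps)
  qed
  show ?thesis
    by (intro allI impI, rule_tac x = "nat \<lceil>4 / \<epsilon>\<rceil> + 1" in exI, intro allI impI, elim conjE)
      (rule order_trans[OF threshold(1) prob_is_projection_NWLin_restr_ge[OF field.is_ring]];
        (assumption | rule threshold(2))+)
qed

end
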